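(* For every $B>0$ there is an online algorithm for the online packing problem which, irrevocably assigning each arriving variable $y_i\ge 0$ when it arrives, achieves $\sum_i y_i\ge \mathsf{OPT}/B$ (i.e., it is $1/B$-competitive), changes $y$ (sets some $y_i>0$) in at most $\mathrm{poly}(n,\log B',\log\mathsf{OPT},\log\alpha)$ rounds, and for every packing constraint $j\in[n]$ satisfies $$\sum_{i=1}^m a_{ij}y_i = c_j\cdot O\!\left(\frac{\log n+\log(a^{\max}_j/a^{\min}_j)}{B}\right).$$
   Context: Online packing problem: the LP is $\max \sum_i y_i$ over $y\in\mathbb{R}^m_{\ge 0}$ subject to $A^T y\le c$, where $A=(a_{ij})\in\mathbb{R}^{m\times n}_{\ge0}$ and $c\in\mathbb{R}^n_{>0}$ is known in advance. The variables $y_i$ (columns of $A^T$, i.e. the values $a_{i1},\dots,a_{in}$, at least one positive) arrive one at a time, $m$ possibly unknown; upon arrival $y_i$ is either left at $0$ or irrevocably assigned a positive value. $\mathsf{OPT}$ is the optimal value of the packing LP. $a^{\max}_j=\max_{i\in[m]}a_{ij}$, $a^{\min}_j=\min_{i\in[m]}\{a_{ij}:a_{ij}>0\}$, $\alpha=\max_{j\in[n]}a^{\max}_j/c_j$, and $B'=3\max_{j\in[n]}\ln(2na^{\max}_j/a^{\min}_j+1)$. *)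

theory Defs
  imports Complex_Main
begin

text \<open>An instance of the online packing problem: n constraints, m arriving variables,
  matrix A (A i j = a_ij, i < m, j < n), capacities c j (j < n).\<close>

definition valid_instance :: "nat \<Rightarrow> nat \<Rightarrow> (nat \<Rightarrow> nat \<Rightarrow> real) \<Rightarrow> (nat \<Rightarrow> real) \<Rightarrow> bool" where
  "valid_instance n m A c \<longleftrightarrow> n \<ge> 1 \<and> m \<ge> 1 \<and> (\<forall>j<n. c j > 0)
     \<and> (\<forall>i<m. \<forall>j<n. A i j \<ge> 0) \<and> (\<forall>i<m. \<exists>j<n. A i j > 0)"

definition packing_feasible :: "nat \<Rightarrow> nat \<Rightarrow> (nat \<Rightarrow> nat \<Rightarrow> real) \<Rightarrow> (nat \<Rightarrow> real) \<Rightarrow> (nat \<Rightarrow> real) \<Rightarrow> bool" where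
  "packing_feasible n m A c y \<longleftrightarrow> (\<forall>i<m. y i \<ge> 0) \<and> (\<forall>j<n. (\<Sum>i<m. A i j * y i) \<le> c j)"

definition OPT :: "nat \<Rightarrow> nat \<Rightarrow> (nat \<Rightarrow> nat \<Rightarrow> real) \<Rightarrow> (nat \<Rightarrow> real) \<Rightarrow> real" where
  "OPT n m A c = Sup {(\<Sum>i<m. y i) | y. packing_feasible n m A c y}"

definition amax :: "nat \<Rightarrow> (nat \<Rightarrow> nat \<Rightarrow> real) \<Rightarrow> nat \<Rightarrow> real" where
  "amax m A j = Max {A i j | i. i < m}"

definition amin :: "nat \<Rightarrow> (nat \<Rightarrow> nat \<Rightarrow> real) \<Rightarrow> nat \<Rightarrow> real" where
  "amin m A j = Min {A i j | i. i < m \<and> A i j > 0}"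

definition alpha :: "nat \<Rightarrow> nat \<Rightarrow> (nat \<Rightarrow> nat \<Rightarrow> real) \<Rightarrow> (nat \<Rightarrow> real) \<Rightarrow> real" where
  "alpha n m A c = Max {amax m A j / c j | j. j < n}"

definition Bprime :: "nat \<Rightarrow> nat \<Rightarrow> (nat \<Rightarrow> nat \<Rightarrow> real) \<Rightarrow> real" where
  "Bprime n m A = 3 * Max {ln (2 * real n * amax m A j / amin m A j + 1) | j. j < n}"

text \<open>A deterministic online algorithm receives n, the capacity vector c (as a list of
  length n) and the list of all columns that have arrived so far (each a list of length n,
  the current one last), and returns the value of the current variable. It never sees m,
  and earlier values cannot be revised, since y_i depends only on the first i+1 columns.\<close>
type_synonym online_alg = "nat \<Rightarrow> real list \<Rightarrow> real list list \<Rightarrow> real"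

definition run :: "online_alg \<Rightarrow> nat \<Rightarrow> (nat \<Rightarrow> nat \<Rightarrow> real) \<Rightarrow> (nat \<Rightarrow> real) \<Rightarrow> nat \<Rightarrow> real" where
  "run alg n A c i = alg n (map c [0..<n]) (map (\<lambda>k. map (A k) [0..<n]) [0..<Suc i])"

end

theory Submission
  imports Defs
begin

text \<open>The algorithm is a continuous primal-dual scheme for the covering dual
  min sum_j x_j subject to sum_j b_kj x_j >= 1 for all k, where b_kj = a_kj / c_j.
  When variable k arrives and its covering constraint is violated, y_k is raised continuously
  while every x_j grows at rate b_kj (x_j + offset_kj), with offset_kj = 1 / (n max_{l <= k} b_lj),
  until the constraint is covered twice.

  The dual is then feasible and sum_j x_j grows by at most 3 per unit of y_k, so weak duality
  gives OPT <= 3 sum_k y_k. The invariant (exp L_j - 1) offset_kj <= x_j for the normalized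
  load L_j = sum_k b_kj y_k, together with b_kj x_j <= 2 after a step touching j, bounds L_j by
  ln (2 n amax_j / amin_j + 1) <= B'/3; so y is feasible up to the factor B'/3.
  Finally, in every active step the coordinate j maximizing b_kj grows by a factor 3/2; it starts
  from at least 1 / (2 n alpha) and never exceeds B' OPT, so each coordinate plays this role
  O(log (n alpha B' OPT)) times. Scaling y by 3 / B gives the theorem.\<close>

lemma ln_three_halves_ge: "1/3 \<le> ln (3/2 :: real)"
  using ln_le_minus_one[of "2/3 :: real"] by (simp add: ln_div)

lemma exp_minus_one_le: "exp u - 1 \<le> u * exp (u::real)"
proof -
  have "(1 - u) * exp u \<le> exp (- u) * exp u"
    using exp_ge_add_one_self[of "- u"] by (intro mult_right_mono) auto
  then show ?thesis by (simp add: exp_minus algebra_simps)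
qed

type_synonym rmat = "nat \<Rightarrow> nat \<Rightarrow> real"
type_synonym rvec = "nat \<Rightarrow> real"

definition scaled :: "rmat \<Rightarrow> rvec \<Rightarrow> nat \<Rightarrow> nat \<Rightarrow> real" where
  "scaled A c k j = A k j / c j"

definition scaled_max :: "rmat \<Rightarrow> rvec \<Rightarrow> nat \<Rightarrow> nat \<Rightarrow> real" where
  "scaled_max A c k j = Max ((\<lambda>l. scaled A c l j) ` {..k})"

definition offset :: "nat \<Rightarrow> rmat \<Rightarrow> rvec \<Rightarrow> nat \<Rightarrow> nat \<Rightarrow> real" where
  "offset n A c k j = 1 / (real n * scaled_max A c k j)"

text \<open>The solution at time t of the ODE x_j' = b_kj (x_j + offset_kj) with initial value x_j:
  this is how the dual variables evolve while y_k is being raised to t.\<close>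

definition dual_flow :: "nat \<Rightarrow> rmat \<Rightarrow> rvec \<Rightarrow> nat \<Rightarrow> rvec \<Rightarrow> real \<Rightarrow> nat \<Rightarrow> real" where
  "dual_flow n A c k x t j = (x j + offset n A c k j) * exp (scaled A c k j * t) - offset n A c k j"

definition coverage :: "nat \<Rightarrow> rmat \<Rightarrow> rvec \<Rightarrow> nat \<Rightarrow> rvec \<Rightarrow> real \<Rightarrow> real" where
  "coverage n A c k x t = (\<Sum>j<n. scaled A c k j * dual_flow n A c k x t j)"

definition step_length :: "nat \<Rightarrow> rmat \<Rightarrow> rvec \<Rightarrow> nat \<Rightarrow> rvec \<Rightarrow> real" where
  "step_length n A c k x =
     (if coverage n A c k x 0 < 1 then (SOME t. 0 \<le> t \<and> coverage n A c k x t = 2) else 0)"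

primrec dual :: "nat \<Rightarrow> rmat \<Rightarrow> rvec \<Rightarrow> nat \<Rightarrow> nat \<Rightarrow> real" where
  "dual n A c 0 = (\<lambda>j. 0)"
| "dual n A c (Suc k) = dual_flow n A c k (dual n A c k) (step_length n A c k (dual n A c k))"

definition primal :: "nat \<Rightarrow> rmat \<Rightarrow> rvec \<Rightarrow> nat \<Rightarrow> real" where
  "primal n A c k = step_length n A c k (dual n A c k)"

definition packing_alg :: "real \<Rightarrow> online_alg" where
  "packing_alg B n cs cols = 3 / B * primal n (\<lambda>l j. cols ! l ! j) (\<lambda>j. cs ! j) (length cols - 1)"

lemma scaled_max_cong:
  assumes "\<forall>l\<le>k. A l j = A' l j" "c j = c' j"
  shows "scaled_max A c k j = scaled_max A' c' k j"
  unfolding scaled_max_def scaled_def using assms by (intro arg_cong[where f = Max] image_cong) auto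

lemma dual_flow_cong:
  assumes "\<forall>l\<le>k. \<forall>j<n. A l j = A' l j" "\<forall>j<n. c j = c' j" "\<forall>j<n. x j = x' j" "j < n"
  shows "dual_flow n A c k x t j = dual_flow n A' c' k x' t j"
  using assms scaled_max_cong[of k A j A' c c'] by (simp add: dual_flow_def offset_def scaled_def)

lemma step_length_cong:
  assumes "\<forall>l\<le>k. \<forall>j<n. A l j = A' l j" "\<forall>j<n. c j = c' j" "\<forall>j<n. x j = x' j"
  shows "step_length n A c k x = step_length n A' c' k x'"
proof -
  have "coverage n A c k x = coverage n A' c' k x'"
    using assms dual_flow_cong[OF assms] by (auto simp: coverage_def scaled_def intro!: sum.cong)
  then show ?thesis by (simp add: step_length_def)
qed

lemma dual_cong:
  assumes "\<forall>l<k. \<forall>j<n. A l j = A' l j" "\<forall>j<n. c j = c' j"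
  shows "\<forall>j<n. dual n A c k j = dual n A' c' k j"
  using assms
proof (induction k)
  case (Suc k)
  then have "\<forall>l\<le>k. \<forall>j<n. A l j = A' l j" "\<forall>j<n. dual n A c k j = dual n A' c' k j" by auto
  moreover from this Suc.prems
  have "step_length n A c k (dual n A c k) = step_length n A' c' k (dual n A' c' k)"
    by (intro step_length_cong) auto
  ultimately show ?case using Suc.prems by (simp add: dual_flow_cong)
qed simp

lemma primal_cong:
  assumes "\<forall>l\<le>k. \<forall>j<n. A l j = A' l j" "\<forall>j<n. c j = c' j"
  shows "primal n A c k = primal n A' c' k"
  unfolding primal_def using assms dual_cong[of k n A A' c c'] by (intro step_length_cong) auto

lemma run_packing_alg: "run (packing_alg B) n A c i = 3 / B * primal n A c i"
proof -
  have "primal n (\<lambda>l j. map (\<lambda>k. map (A k) [0..<n]) [0..<Suc i] ! l ! j) (\<lambda>j. map c [0..<n] ! j) i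
      = primal n A c i"
    by (intro primal_cong) (auto simp del: upt_Suc)
  then show ?thesis by (simp add: run_def packing_alg_def)
qed

lemma run_cong:
  assumes "\<forall>k\<le>i. \<forall>j<n. A k j = A' k j"
  shows "run alg n A c i = run alg n A' c i"
  unfolding run_def using assms by (intro arg_cong[where f = "alg n _"] map_cong) auto

locale packing_stream =
  fixes n :: nat and A :: rmat and c :: rvec
  assumes n_pos: "n \<ge> 1"
    and c_pos: "j < n \<Longrightarrow> c j > 0"
    and A_nonneg: "j < n \<Longrightarrow> A k j \<ge> 0"
    and A_row_pos: "\<exists>j<n. A k j > 0"
begin

abbreviation "b \<equiv> scaled A c"
abbreviation "bmax \<equiv> scaled_max A c"
abbreviation "\<beta> \<equiv> offset n A c"
abbreviation "flow \<equiv> dual_flow n A c"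
abbreviation "cov \<equiv> coverage n A c"
abbreviation "x \<equiv> dual n A c"
abbreviation "y \<equiv> primal n A c"

lemma scaled_nonneg: "j < n \<Longrightarrow> 0 \<le> b k j"
  using c_pos[of j] A_nonneg[of j k] by (simp add: scaled_def)

lemma scaled_pos: "j < n \<Longrightarrow> A k j > 0 \<Longrightarrow> 0 < b k j"
  using c_pos[of j] by (simp add: scaled_def)

lemma scaled_le_max: "l \<le> k \<Longrightarrow> b l j \<le> bmax k j"
  unfolding scaled_max_def by (intro Max_ge) auto

lemma scaled_max_mono: "k \<le> k' \<Longrightarrow> bmax k j \<le> bmax k' j"
  unfolding scaled_max_def by (intro Max_mono) auto

lemma scaled_max_attained: "\<exists>l\<le>k. bmax k j = b l j"
proof -
  have "bmax k j \<in> (\<lambda>l. b l j) ` {..k}"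
    unfolding scaled_max_def by (intro Max_in) auto
  then show ?thesis by auto
qed

lemma offset_nonneg: "j < n \<Longrightarrow> 0 \<le> \<beta> k j"
  using scaled_le_max[of k k j] scaled_nonneg[of j k] by (simp add: offset_def)

lemma scaled_offset_le: "j < n \<Longrightarrow> b k j * \<beta> k j \<le> 1 / real n"
proof (cases "b k j = 0")
  case False
  moreover assume "j < n"
  ultimately have "0 < b k j" "b k j \<le> bmax k j"
    using scaled_nonneg[of j k] scaled_le_max[of k k j] by auto
  then show ?thesis using n_pos by (simp add: offset_def field_simps)
qed simp

lemma sum_scaled_offset_le: "(\<Sum>j<n. b k j * \<beta> k j) \<le> 1"
proof -
  have "(\<Sum>j<n. b k j * \<beta> k j) \<le> (\<Sum>j<n. 1 / real n)"
    by (intro sum_mono scaled_offset_le) auto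
  then show ?thesis using n_pos by simp
qed

lemma offset_antimono: "bmax k j > 0 \<Longrightarrow> k \<le> k' \<Longrightarrow> \<beta> k' j \<le> \<beta> k j"
  using scaled_max_mono[of k k' j] n_pos unfolding offset_def
  by (intro divide_left_mono mult_left_mono mult_pos_pos) auto

lemma le_dual_flow:
  assumes "0 \<le> x' j" "j < n" "0 \<le> t"
  shows "x' j \<le> flow k x' t j"
proof -
  have "(x' j + \<beta> k j) * 1 \<le> (x' j + \<beta> k j) * exp (b k j * t)"
    using assms scaled_nonneg offset_nonneg by (intro mult_left_mono) auto
  then show ?thesis by (simp add: dual_flow_def)
qed

lemma coverage_zero: "cov k x' 0 = (\<Sum>j<n. b k j * x' j)"
  by (simp add: coverage_def dual_flow_def)

lemma coverage_reaches_two: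
  assumes x'_nonneg: "\<forall>j<n. 0 \<le> x' j" and uncovered: "cov k x' 0 < 1"
  shows "\<exists>t\<ge>0. cov k x' t = 2"
proof -
  obtain j where j: "j < n" "A k j > 0" using A_row_pos by auto
  have b: "b k j > 0" using scaled_pos[OF j] .
  then have \<beta>: "\<beta> k j > 0"
    using scaled_le_max[of k k j] n_pos by (simp add: offset_def)
  define T where "T = 2 / (b k j * b k j * \<beta> k j)"
  have T: "0 \<le> T" using b \<beta> by (simp add: T_def)
  have "2 = b k j * (\<beta> k j * (1 + b k j * T) - \<beta> k j)"
    using b \<beta> by (simp add: T_def field_simps)
  also have "\<dots> \<le> b k j * (\<beta> k j * exp (b k j * T) - \<beta> k j)"
    using b \<beta> exp_ge_add_one_self[of "b k j * T"] by (intro mult_left_mono) auto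
  also have "\<dots> \<le> b k j * flow k x' T j"
    using b x'_nonneg j by (intro mult_left_mono) (auto simp: dual_flow_def algebra_simps)
  also have "\<dots> \<le> cov k x' T"
    unfolding coverage_def using j T x'_nonneg scaled_nonneg le_dual_flow
    by (intro member_le_sum mult_nonneg_nonneg) (auto intro: order_trans)
  finally have "2 \<le> cov k x' T" .
  moreover have "continuous_on {0..T} (cov k x')"
    unfolding coverage_def dual_flow_def by (intro continuous_intros)
  ultimately show ?thesis
    using IVT'[of "cov k x'" 0 2 T] uncovered T by force
qed

lemma step_length_nonneg: "\<forall>j<n. 0 \<le> x' j \<Longrightarrow> 0 \<le> step_length n A c k x'"
  using someI_ex[OF coverage_reaches_two] by (auto simp: step_length_def)

lemma coverage_step_length:
  "\<forall>j<n. 0 \<le> x' j \<Longrightarrow> cov k x' 0 < 1 \<Longrightarrow> cov k x' (step_length n A c k x') = 2"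
  using someI_ex[OF coverage_reaches_two] by (auto simp: step_length_def)

lemma dual_Suc: "x (Suc k) = flow k (x k) (y k)"
  by (simp add: primal_def)

declare dual.simps(2)[simp del]

lemma dual_nonneg: "j < n \<Longrightarrow> 0 \<le> x k j"
proof (induction k arbitrary: j)
  case (Suc k)
  then have "\<forall>j<n. 0 \<le> x k j" by blast
  then have "x k j \<le> flow k (x k) (y k) j"
    using Suc.prems unfolding primal_def by (intro le_dual_flow step_length_nonneg) auto
  with Suc show ?case by (fastforce simp: dual_Suc)
qed simp

lemma primal_nonneg: "0 \<le> y k"
  unfolding primal_def using dual_nonneg by (intro step_length_nonneg) auto

lemma dual_mono: assumes "j < n" "k \<le> k'" shows "x k j \<le> x k' j"
  using assms(2)
proof (induction k' rule: dec_induct)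
  case (step k')
  have "x k' j \<le> x (Suc k') j"
    unfolding dual_Suc using assms(1) by (intro le_dual_flow dual_nonneg primal_nonneg)
  with step show ?case by simp
qed simp

lemma primal_eq_0_if_covered: "\<not> cov k (x k) 0 < 1 \<Longrightarrow> y k = 0"
  by (simp add: primal_def step_length_def)

lemma coverage_primal: "cov k (x k) (y k) = (\<Sum>j<n. b k j * x (Suc k) j)"
  by (simp add: coverage_def dual_Suc)

lemma coverage_primal_eq_2: "cov k (x k) 0 < 1 \<Longrightarrow> cov k (x k) (y k) = 2"
  unfolding primal_def using dual_nonneg by (intro coverage_step_length) auto

lemma dual_covers_arrived: "1 \<le> (\<Sum>j<n. b k j * x (Suc k) j)"
proof (cases "cov k (x k) 0 < 1")
  case True
  then show ?thesis using coverage_primal_eq_2 coverage_primal by simp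
next
  case False
  then have "x (Suc k) = x k"
    using primal_eq_0_if_covered by (simp add: dual_Suc dual_flow_def fun_eq_iff)
  then show ?thesis using False coverage_zero by simp
qed

lemma dual_covers:
  assumes "k < K"
  shows "1 \<le> (\<Sum>j<n. b k j * x K j)"
proof -
  have "(\<Sum>j<n. b k j * x (Suc k) j) \<le> (\<Sum>j<n. b k j * x K j)"
    using assms by (intro sum_mono mult_left_mono dual_mono scaled_nonneg) auto
  then show ?thesis using dual_covers_arrived[of k] by linarith
qed

text \<open>Raising y_k by dt increases sum_j x_j at rate sum_j b_kj (x_j + offset_kj), which is the
  coverage plus at most 1; the coverage never exceeds 2 during the step.\<close>

lemma sum_dual_Suc_le: "(\<Sum>j<n. x (Suc k) j) \<le> (\<Sum>j<n. x k j) + 3 * y k"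
proof (cases "cov k (x k) 0 < 1")
  case False
  then show ?thesis by (simp add: dual_Suc primal_eq_0_if_covered dual_flow_def)
next
  case True
  let ?t = "y k"
  have "x (Suc k) j - x k j \<le> ?t * (b k j * ((x k j + \<beta> k j) * exp (b k j * ?t)))" if "j < n" for j
  proof -
    have "x (Suc k) j - x k j = (x k j + \<beta> k j) * (exp (b k j * ?t) - 1)"
      by (simp add: dual_Suc dual_flow_def algebra_simps)
    also have "\<dots> \<le> (x k j + \<beta> k j) * (b k j * ?t * exp (b k j * ?t))"
      using that dual_nonneg offset_nonneg by (intro mult_left_mono exp_minus_one_le) auto
    finally show ?thesis by (simp add: algebra_simps)
  qed
  then have "(\<Sum>j<n. x (Suc k) j - x k j)
      \<le> (\<Sum>j<n. ?t * (b k j * ((x k j + \<beta> k j) * exp (b k j * ?t))))"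
    by (intro sum_mono) auto
  then have "(\<Sum>j<n. x (Suc k) j) - (\<Sum>j<n. x k j)
      \<le> ?t * (\<Sum>j<n. b k j * ((x k j + \<beta> k j) * exp (b k j * ?t)))"
    by (simp add: sum_subtractf sum_distrib_left)
  also have "(\<Sum>j<n. b k j * ((x k j + \<beta> k j) * exp (b k j * ?t)))
      = cov k (x k) ?t + (\<Sum>j<n. b k j * \<beta> k j)"
    by (simp add: coverage_def dual_flow_def sum.distrib[symmetric] algebra_simps)
  also have "\<dots> \<le> 3"
    using coverage_primal_eq_2[OF True] sum_scaled_offset_le[of k] by simp
  finally show ?thesis using primal_nonneg[of k] by (simp add: mult_left_mono)
qed

lemma sum_dual_le: "(\<Sum>j<n. x K j) \<le> 3 * (\<Sum>k<K. y k)"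
proof (induction K)
  case (Suc K)
  then show ?case using sum_dual_Suc_le[of K] by (simp add: algebra_simps)
qed simp

definition load :: "nat \<Rightarrow> nat \<Rightarrow> real" where
  "load K j = (\<Sum>k<K. b k j * y k)"

lemma load_nonneg: "j < n \<Longrightarrow> 0 \<le> load K j"
  unfolding load_def by (intro sum_nonneg mult_nonneg_nonneg scaled_nonneg primal_nonneg) auto

lemma load_Suc: "load (Suc K) j = load K j + b K j * y K"
  by (simp add: load_def)

lemma load_invariant: "j < n \<Longrightarrow> K \<le> Suc k \<Longrightarrow> (exp (load K j) - 1) * \<beta> k j \<le> x K j"
proof (induction K arbitrary: k)
  case 0
  then show ?case by (simp add: load_def)
next
  case (Suc K)
  show ?case
  proof (cases "bmax K j = 0")
    case True
    then have "\<forall>l\<le>K. b l j = 0"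
      using scaled_le_max[of _ K j] scaled_nonneg[OF Suc.prems(1)] by (metis order_antisym)
    then have "load (Suc K) j = 0" unfolding load_def by (intro sum.neutral) auto
    then show ?thesis using dual_nonneg[OF Suc.prems(1)] by simp
  next
    case False
    then have "bmax K j > 0"
      using scaled_le_max[of K K j] scaled_nonneg[OF Suc.prems(1), of K] by linarith
    then have "\<beta> k j \<le> \<beta> K j" using offset_antimono Suc.prems by simp
    then have "(exp (load (Suc K) j) - 1) * \<beta> k j \<le> (exp (load (Suc K) j) - 1) * \<beta> K j"
      using load_nonneg[OF Suc.prems(1)] by (intro mult_left_mono) auto
    also have "\<dots> = exp (load K j) * \<beta> K j * exp (b K j * y K) - \<beta> K j"
      by (simp add: load_Suc exp_add algebra_simps)
    also have "\<dots> \<le> (x K j + \<beta> K j) * exp (b K j * y K) - \<beta> K j"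
      using Suc.IH[of K] Suc.prems by (intro diff_right_mono mult_right_mono) (auto simp: algebra_simps)
    also have "\<dots> = x (Suc K) j" by (simp add: dual_Suc dual_flow_def)
    finally show ?thesis .
  qed
qed

text \<open>After an active step the coverage is exactly 2, so b_kj x_j \<le> 2; combined with the
  invariant this caps the load of a constraint touched by that step.\<close>

lemma load_after_active_step:
  assumes j: "j < n" and A: "A k j > 0" and y: "y k > 0"
  shows "exp (load (Suc k) j) - 1 \<le> 2 * real n * bmax k j / b k j"
proof -
  have b: "b k j > 0" using scaled_pos[OF j A] .
  have bmax: "bmax k j > 0" using scaled_le_max[of k k j] b by linarith
  have "cov k (x k) 0 < 1" using y primal_eq_0_if_covered by force
  then have "(\<Sum>j<n. b k j * x (Suc k) j) = 2" using coverage_primal_eq_2 coverage_primal by simp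
  moreover have "b k j * x (Suc k) j \<le> (\<Sum>j<n. b k j * x (Suc k) j)"
    using j by (intro member_le_sum mult_nonneg_nonneg scaled_nonneg dual_nonneg) auto
  moreover have "b k j * ((exp (load (Suc k) j) - 1) * \<beta> k j) \<le> b k j * x (Suc k) j"
    using load_invariant[OF j] b by (intro mult_left_mono) auto
  ultimately have "b k j * ((exp (load (Suc k) j) - 1) * \<beta> k j) \<le> 2" by linarith
  then have "(exp (load (Suc k) j) - 1) * (b k j / (real n * bmax k j)) \<le> 2"
    by (simp add: offset_def algebra_simps)
  then show ?thesis using b bmax n_pos by (simp add: field_simps)
qed

definition heaviest :: "nat \<Rightarrow> nat" where
  "heaviest k = (SOME j. j < n \<and> (\<forall>j'<n. b k j' \<le> b k j))"

lemma heaviest: "heaviest k < n" "j < n \<Longrightarrow> b k j \<le> b k (heaviest k)"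
proof -
  have "Max (b k ` {..<n}) \<in> b k ` {..<n}" using n_pos by (intro Max_in) (auto simp: lessThan_empty_iff)
  then obtain j0 where "j0 < n" "b k j0 = Max (b k ` {..<n})" by auto
  then have "\<exists>j. j < n \<and> (\<forall>j'<n. b k j' \<le> b k j)" by auto
  from someI_ex[OF this] show "heaviest k < n" "j < n \<Longrightarrow> b k j \<le> b k (heaviest k)"
    unfolding heaviest_def by auto
qed

lemma scaled_heaviest_pos: "b k (heaviest k) > 0"
proof -
  obtain j where "j < n" "A k j > 0" using A_row_pos by auto
  then show ?thesis using scaled_pos heaviest(2) by (meson less_le_trans)
qed

text \<open>With M = exp (b_kh y_k) for the heaviest h and S = sum_j b_kj offset_kj \<le> 1, an
  active step gives 2 + S \<le> M (coverage before the step + S) < M (1 + S).\<close>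

lemma exp_heaviest_ge:
  assumes "y k > 0"
  shows "3/2 \<le> exp (b k (heaviest k) * y k)"
proof -
  define M where "M = exp (b k (heaviest k) * y k)"
  define S where "S = (\<Sum>j<n. b k j * \<beta> k j)"
  have uncovered: "cov k (x k) 0 < 1" using assms primal_eq_0_if_covered by force
  have "(\<Sum>j<n. b k j * (x k j + \<beta> k j) * exp (b k j * y k)) = cov k (x k) (y k) + S"
    by (simp add: S_def coverage_def dual_flow_def sum.distrib[symmetric] algebra_simps)
  then have "2 + S = (\<Sum>j<n. b k j * (x k j + \<beta> k j) * exp (b k j * y k))"
    using coverage_primal_eq_2[OF uncovered] by simp
  also have "\<dots> \<le> (\<Sum>j<n. b k j * (x k j + \<beta> k j) * M)"
    unfolding M_def using heaviest(2) assms
    by (intro sum_mono mult_left_mono mult_nonneg_nonneg add_nonneg_nonneg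
        scaled_nonneg dual_nonneg offset_nonneg) (auto intro: mult_right_mono)
  also have "\<dots> = M * (cov k (x k) 0 + S)"
    by (simp add: coverage_zero S_def sum_distrib_left sum.distrib algebra_simps)
  also have "\<dots> < M * (1 + S)" using uncovered by (simp add: M_def)
  finally have "2 + S < M * (1 + S)" .
  have "0 \<le> S" "S \<le> 1"
    unfolding S_def using sum_scaled_offset_le
    by (auto intro!: sum_nonneg mult_nonneg_nonneg scaled_nonneg offset_nonneg)
  show ?thesis
  proof (rule ccontr)
    assume "\<not> 3/2 \<le> exp (b k (heaviest k) * y k)"
    then have "M * (1 + S) \<le> 3/2 * (1 + S)"
      using \<open>0 \<le> S\<close> by (intro mult_right_mono) (auto simp: M_def)
    with \<open>2 + S < M * (1 + S)\<close> \<open>S \<le> 1\<close> show False by simp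
  qed
qed

lemma heaviest_growth:
  assumes "y k > 0"
  shows "3/2 * x k (heaviest k) + \<beta> k (heaviest k) / 2 \<le> x (Suc k) (heaviest k)"
proof -
  let ?h = "heaviest k"
  have "(x k ?h + \<beta> k ?h) * (3/2) \<le> (x k ?h + \<beta> k ?h) * exp (b k ?h * y k)"
    using exp_heaviest_ge[OF assms] heaviest(1) dual_nonneg offset_nonneg
    by (intro mult_left_mono) auto
  then show ?thesis by (simp add: dual_Suc dual_flow_def algebra_simps)
qed

end

locale packing_instance = packing_stream +
  fixes m :: nat
  assumes m_pos: "m \<ge> 1"
begin

abbreviation "a_max \<equiv> amax m A"
abbreviation "a_min \<equiv> amin m A"

lemma le_amax: "k < m \<Longrightarrow> A k j \<le> a_max j"
  unfolding amax_def by (intro Max_ge) auto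

lemma amax_attained: "\<exists>i<m. a_max j = A i j"
proof -
  have "a_max j \<in> (\<lambda>i. A i j) ` {i. i < m}"
    unfolding amax_def setcompr_eq_image using m_pos by (intro Max_in) (auto intro!: exI[of _ 0])
  then show ?thesis by auto
qed

lemma amin_le: "k < m \<Longrightarrow> A k j > 0 \<Longrightarrow> a_min j \<le> A k j"
  unfolding amin_def by (intro Min_le) (auto simp: setcompr_eq_image)

lemma amin_pos: "k < m \<Longrightarrow> A k j > 0 \<Longrightarrow> a_min j > 0"
proof -
  assume "k < m" "A k j > 0"
  then have "a_min j \<in> (\<lambda>i. A i j) ` {i. i < m \<and> A i j > 0}"
    unfolding amin_def setcompr_eq_image by (intro Min_in) auto
  then show ?thesis by auto
qed

lemma amax_div_amin_nonneg:
  assumes "j < n"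
  shows "0 \<le> a_max j / a_min j"
proof (cases "a_max j = 0")
  case False
  obtain i where i: "i < m" "a_max j = A i j" using amax_attained by blast
  with False have pos: "A i j > 0" using A_nonneg[OF assms, of i] by simp
  with i show ?thesis using amin_pos[OF i(1) pos] by simp
qed simp

lemma scaled_max_le_amax: "j < n \<Longrightarrow> k < m \<Longrightarrow> bmax k j \<le> a_max j / c j"
proof -
  assume "j < n" "k < m"
  moreover obtain l where "l \<le> k" "bmax k j = b l j" using scaled_max_attained by blast
  ultimately show ?thesis
    using le_amax[of l j] c_pos[of j] by (simp add: scaled_def divide_right_mono)
qed

definition load_bound :: "nat \<Rightarrow> real" where
  "load_bound j = ln (2 * real n * a_max j / a_min j + 1)"

lemma load_le_bound: assumes j: "j < n" shows "K \<le> m \<Longrightarrow> load K j \<le> load_bound j"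
proof (induction K)
  case 0
  have "0 \<le> 2 * real n * a_max j / a_min j"
    using mult_nonneg_nonneg[of "2 * real n", OF _ amax_div_amin_nonneg[OF j]] by simp
  then show ?case by (simp add: load_def load_bound_def)
next
  case (Suc K)
  show ?case
  proof (cases "b K j * y K = 0")
    case True
    then show ?thesis using Suc by (auto simp: load_Suc)
  next
    case False
    then have b: "b K j > 0" and y: "y K > 0"
      using scaled_nonneg[OF j, of K] primal_nonneg[of K] by (simp_all add: less_le)
    then have A: "A K j > 0" using c_pos[OF j] by (simp add: scaled_def zero_less_divide_iff)
    have K: "K < m" using Suc.prems by simp
    have amax: "0 < a_max j" using le_amax[OF K, of j] A by linarith
    have "exp (load (Suc K) j) - 1 \<le> 2 * real n * bmax K j / b K j"
      by (rule load_after_active_step[OF j A y])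
    also have "\<dots> \<le> 2 * real n * (a_max j / c j) / b K j"
      using scaled_max_le_amax[OF j K] b by (intro divide_right_mono mult_left_mono) auto
    also have "\<dots> \<le> 2 * real n * (a_max j / c j) / (a_min j / c j)"
      using amin_le[OF K A] amin_pos[OF K A] c_pos[OF j] amax
      by (intro divide_left_mono) (auto simp: scaled_def divide_right_mono)
    also have "\<dots> = 2 * real n * a_max j / a_min j" using c_pos[OF j] by simp
    finally have "exp (load (Suc K) j) \<le> 2 * real n * a_max j / a_min j + 1" by linarith
    moreover have "0 < 2 * real n * a_max j / a_min j + 1"
      using amax amin_pos[OF K A] n_pos by (intro add_pos_pos divide_pos_pos mult_pos_pos) auto
    ultimately show ?thesis unfolding load_bound_def by (simp add: ln_ge_iff)
  qed
qed

lemma load_bound_le_Bprime: "j < n \<Longrightarrow> 3 * load_bound j \<le> Bprime n m A"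
  unfolding Bprime_def load_bound_def by (intro mult_left_mono Max_ge) auto

lemma Bprime_pos: "0 < Bprime n m A"
proof -
  obtain j where j: "j < n" "A 0 j > 0" using A_row_pos by auto
  then have "0 < a_max j / a_min j"
    using le_amax[of 0 j] amin_pos[of 0 j] m_pos by simp
  then have "0 < load_bound j"
    unfolding load_bound_def using n_pos mult_pos_pos[of "2 * real n" "a_max j / a_min j"]
    by (intro ln_gt_zero) simp
  then show ?thesis using load_bound_le_Bprime[OF j(1)] by linarith
qed

lemma feasible_sum_le_dual:
  assumes "packing_feasible n m A c z"
  shows "(\<Sum>i<m. z i) \<le> (\<Sum>j<n. x m j)"
proof -
  have z: "\<And>i. i < m \<Longrightarrow> 0 \<le> z i" "\<And>j. j < n \<Longrightarrow> (\<Sum>i<m. b i j * z i) \<le> 1"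
    using assms c_pos by (auto simp: packing_feasible_def scaled_def sum_divide_distrib[symmetric])
  have "(\<Sum>i<m. z i) \<le> (\<Sum>i<m. z i * (\<Sum>j<n. b i j * x m j))"
  proof (intro sum_mono)
    fix i assume "i \<in> {..<m}"
    then show "z i \<le> z i * (\<Sum>j<n. b i j * x m j)"
      using mult_left_mono[OF dual_covers[of i m] z(1)[of i]] by simp
  qed
  also have "\<dots> = (\<Sum>j<n. x m j * (\<Sum>i<m. b i j * z i))"
    by (simp add: sum_distrib_left sum_distrib_right sum.swap[of _ "{..<m}"] algebra_simps)
  also have "\<dots> \<le> (\<Sum>j<n. x m j)"
    using z(2) dual_nonneg by (intro sum_mono) (simp add: mult_left_le)
  finally show ?thesis .
qed

lemma OPT_le_primal: "OPT n m A c \<le> 3 * (\<Sum>k<m. y k)"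
proof -
  have "packing_feasible n m A c (\<lambda>i. 0)"
    using c_pos by (auto simp: packing_feasible_def less_imp_le)
  then have "OPT n m A c \<le> (\<Sum>j<n. x m j)"
    unfolding OPT_def using feasible_sum_le_dual by (intro cSup_least) auto
  then show ?thesis using sum_dual_le[of m] by linarith
qed

lemma primal_le_OPT: "3 * (\<Sum>k<m. y k) \<le> Bprime n m A * OPT n m A c"
proof -
  let ?z = "\<lambda>i. 3 * y i / Bprime n m A"
  have "packing_feasible n m A c ?z"
    unfolding packing_feasible_def
  proof (intro conjI allI impI)
    fix j assume j: "j < n"
    have "(\<Sum>i<m. A i j * ?z i) = c j * (3 * load m j) / Bprime n m A"
      using c_pos[OF j] by (simp add: load_def scaled_def sum_divide_distrib sum_distrib_left field_simps)
    also have "\<dots> \<le> c j"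
      using load_le_bound[OF j, of m] load_bound_le_Bprime[OF j] c_pos[OF j] Bprime_pos
      by (simp add: field_simps)
    finally show "(\<Sum>i<m. A i j * ?z i) \<le> c j" .
  qed (use primal_nonneg Bprime_pos in simp)
  moreover have "bdd_above {(\<Sum>i<m. z i) | z. packing_feasible n m A c z}"
    using feasible_sum_le_dual by (auto simp: bdd_above_def)
  ultimately have "(\<Sum>i<m. ?z i) \<le> OPT n m A c"
    unfolding OPT_def by (intro cSup_upper) auto
  then show ?thesis
    using Bprime_pos by (simp add: sum_divide_distrib[symmetric] sum_distrib_left[symmetric] field_simps)
qed

lemma primal_0_pos: "y 0 > 0"
proof -
  have "cov 0 (x 0) 0 = 0" by (simp add: coverage_zero)
  moreover from this have "cov 0 (x 0) (y 0) = 2" by (intro coverage_primal_eq_2) simp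
  ultimately have "y 0 \<noteq> 0" by force
  then show ?thesis using primal_nonneg[of 0] by simp
qed

lemma OPT_pos: "OPT n m A c > 0"
proof -
  have "y 0 \<le> (\<Sum>k<m. y k)" using m_pos primal_nonneg by (intro member_le_sum) auto
  then have "0 < Bprime n m A * OPT n m A c" using primal_0_pos primal_le_OPT by linarith
  then show ?thesis using Bprime_pos by (simp add: zero_less_mult_iff)
qed

lemma scaled_max_le_alpha:
  assumes "j < n" "k < m"
  shows "bmax k j \<le> alpha n m A c"
proof -
  have "a_max j / c j \<le> alpha n m A c"
    unfolding alpha_def using assms(1) by (intro Max_ge) (auto simp: setcompr_eq_image)
  then show ?thesis using scaled_max_le_amax[OF assms] by linarith
qed

lemma alpha_pos: "0 < alpha n m A c"
proof -
  have "0 < b 0 (heaviest 0)" by (rule scaled_heaviest_pos)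
  also have "\<dots> \<le> bmax 0 (heaviest 0)" by (rule scaled_le_max) simp
  also have "\<dots> \<le> alpha n m A c" using heaviest(1) m_pos by (intro scaled_max_le_alpha) auto
  finally show ?thesis .
qed

lemma offset_heaviest_ge:
  assumes "k < m"
  shows "1 / (real n * alpha n m A c) \<le> \<beta> k (heaviest k)"
proof -
  have "0 < bmax k (heaviest k)"
    using scaled_heaviest_pos[of k] scaled_le_max[of k k "heaviest k"] by linarith
  moreover have "bmax k (heaviest k) \<le> alpha n m A c"
    using heaviest(1) assms by (rule scaled_max_le_alpha)
  ultimately show ?thesis
    using n_pos unfolding offset_def by (intro divide_left_mono mult_left_mono mult_pos_pos) auto
qed

text \<open>The ratio between the largest possible dual value B' OPT and the smallest value
  1 / (2 n alpha) a heaviest coordinate can have after its first active step.\<close>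

definition dual_range :: real where
  "dual_range = 2 * real n * alpha n m A c * Bprime n m A * OPT n m A c"

definition heaviest_count :: "nat \<Rightarrow> nat \<Rightarrow> nat" where
  "heaviest_count K j = card {k. k < K \<and> y k > 0 \<and> heaviest k = j}"

lemma heaviest_count_Suc:
  "heaviest_count (Suc K) j
     = (if y K > 0 \<and> heaviest K = j then Suc (heaviest_count K j) else heaviest_count K j)"
proof -
  have "{k. k < Suc K \<and> y k > 0 \<and> heaviest k = j}
      = (if y K > 0 \<and> heaviest K = j then insert K else id) {k. k < K \<and> y k > 0 \<and> heaviest k = j}"
    by (auto simp: less_Suc_eq)
  then show ?thesis by (simp add: heaviest_count_def)
qed

text \<open>Each time j is the heaviest coordinate of an active step, x_j is multiplied by at least
  3/2, and the first time it becomes at least offset/2 \<ge> 1 / (2 n alpha).\<close>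

lemma dual_ge_heaviest_count:
  assumes j: "j < n"
  shows "K \<le> m \<Longrightarrow> 1 \<le> heaviest_count K j
    \<Longrightarrow> (3/2) ^ (heaviest_count K j - 1) / (2 * real n * alpha n m A c) \<le> x K j"
proof (induction K)
  case 0
  then show ?case by (simp add: heaviest_count_def)
next
  case (Suc K)
  show ?case
  proof (cases "y K > 0 \<and> heaviest K = j")
    case False
    then have count: "heaviest_count (Suc K) j = heaviest_count K j"
      by (simp add: heaviest_count_Suc)
    then have "(3/2) ^ (heaviest_count K j - 1) / (2 * real n * alpha n m A c) \<le> x K j"
      using Suc by simp
    then show ?thesis using count dual_mono[OF j, of K "Suc K"] by simp
  next
    case True
    then have growth: "3/2 * x K j + \<beta> K j / 2 \<le> x (Suc K) j"
      using heaviest_growth by blast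
    show ?thesis
    proof (cases "heaviest_count K j = 0")
      case True
      have "1 / (real n * alpha n m A c) \<le> \<beta> K j"
        using offset_heaviest_ge[of K] \<open>y K > 0 \<and> heaviest K = j\<close> Suc.prems by simp
      then have "1 / (2 * real n * alpha n m A c) \<le> \<beta> K j / 2"
        using divide_right_mono[of _ _ 2] by (simp add: mult.commute mult.left_commute)
      then have "1 / (2 * real n * alpha n m A c) \<le> x (Suc K) j"
        using growth dual_nonneg[OF j, of K] by linarith
      moreover have "heaviest_count (Suc K) j = 1"
        using True \<open>y K > 0 \<and> heaviest K = j\<close> by (simp add: heaviest_count_Suc)
      ultimately show ?thesis by simp
    next
      case False
      then have "(3/2) ^ (heaviest_count K j - 1) / (2 * real n * alpha n m A c) \<le> x K j"
        using Suc by simp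
      moreover have "0 \<le> \<beta> K j" using offset_nonneg[OF j] .
      ultimately show ?thesis
        using False True growth by (cases "heaviest_count K j") (auto simp: heaviest_count_Suc)
    qed
  qed
qed

lemma heaviest_count_le:
  assumes j: "j < n"
  shows "real (heaviest_count m j)
    \<le> 1 + 3 * \<bar>ln dual_range\<bar>"
proof (cases "heaviest_count m j = 0")
  case False
  let ?N = "heaviest_count m j - 1"
  have pos: "0 < 2 * real n * alpha n m A c" using alpha_pos n_pos by simp
  have "x m j \<le> (\<Sum>j<n. x m j)" using j dual_nonneg by (intro member_le_sum) auto
  also have "\<dots> \<le> Bprime n m A * OPT n m A c" using sum_dual_le primal_le_OPT by (rule order_trans)
  finally have "(3/2) ^ ?N / (2 * real n * alpha n m A c) \<le> Bprime n m A * OPT n m A c"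
    using dual_ge_heaviest_count[OF j, of m] False by simp
  then have "(3/2) ^ ?N \<le> Bprime n m A * OPT n m A c * (2 * real n * alpha n m A c)"
    by (simp add: pos_divide_le_eq[OF pos])
  also have "\<dots> = dual_range" by (simp add: dual_range_def algebra_simps)
  finally have "(3/2) ^ ?N \<le> dual_range" .
  then have "real ?N * ln (3/2) \<le> ln dual_range"
    using ln_mono[of "(3/2) ^ ?N" dual_range] by (simp add: ln_realpow)
  moreover have "real ?N * (1/3) \<le> real ?N * ln (3/2)"
    using ln_three_halves_ge by (intro mult_left_mono) auto
  ultimately show ?thesis using False by (simp add: of_nat_diff)
qed simp

lemma card_active_le:
  "real (card {k. k < m \<and> y k > 0})
    \<le> real n * (1 + 3 * \<bar>ln dual_range\<bar>)"
proof -
  have "{k. k < m \<and> y k > 0} = (\<Union>j<n. {k. k < m \<and> y k > 0 \<and> heaviest k = j})"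
    using heaviest(1) by auto
  then have "card {k. k < m \<and> y k > 0} \<le> (\<Sum>j<n. heaviest_count m j)"
    unfolding heaviest_count_def by (simp add: card_UN_le)
  then have "real (card {k. k < m \<and> y k > 0}) \<le> (\<Sum>j<n. real (heaviest_count m j))"
    by (metis of_nat_le_iff of_nat_sum)
  also have "\<dots> \<le> (\<Sum>j<n. 1 + 3 * \<bar>ln dual_range\<bar>)"
    using heaviest_count_le by (intro sum_mono) auto
  finally show ?thesis by simp
qed

lemma active_rounds_le:
  "real (card {k. k < m \<and> y k > 0})
    \<le> 4 * (1 + real n + \<bar>ln (Bprime n m A)\<bar> + \<bar>ln (OPT n m A c)\<bar> + \<bar>ln (alpha n m A c)\<bar>) ^ 2"
proof -
  define P where
    "P = 1 + real n + \<bar>ln (Bprime n m A)\<bar> + \<bar>ln (OPT n m A c)\<bar> + \<bar>ln (alpha n m A c)\<bar>"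
  have "ln dual_range
      = ln 2 + ln (real n) + ln (alpha n m A c) + ln (Bprime n m A) + ln (OPT n m A c)"
    using n_pos alpha_pos Bprime_pos OPT_pos by (simp add: dual_range_def ln_mult)
  moreover have "0 \<le> ln (real n)" "ln (real n) \<le> real n" "0 \<le> ln (2::real)" "ln (2::real) \<le> 1"
    using n_pos ln_le_minus_one[of "real n"] ln_le_minus_one[of 2] by auto
  ultimately have "\<bar>ln dual_range\<bar> \<le> P"
    unfolding P_def by (smt (verit))
  moreover have "1 \<le> P" "real n \<le> P" unfolding P_def by auto
  ultimately have "real n * (1 + 3 * \<bar>ln dual_range\<bar>)
      \<le> P * (1 + 3 * P)"
    by (intro mult_mono) auto
  also have "\<dots> \<le> 4 * P ^ 2" using \<open>1 \<le> P\<close> by (simp add: power2_eq_square algebra_simps)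
  finally show ?thesis using card_active_le unfolding P_def by linarith
qed

lemma load_bound_le_log_ratio:
  assumes j: "j < n" and i: "i < m" "A i j > 0"
  shows "load_bound j \<le> 2 * (1 + ln (real n) + ln (a_max j / a_min j))"
proof -
  let ?r = "a_max j / a_min j"
  have r: "1 \<le> ?r" using amin_le[OF i] le_amax[OF i(1), of j] amin_pos[OF i] by simp
  have n: "1 \<le> real n" using n_pos by simp
  define s where "s = real n * ?r"
  have s: "1 \<le> s" unfolding s_def using mult_mono[OF n r] by simp
  have ln_s: "ln s = ln (real n) + ln ?r" unfolding s_def using n r by (intro ln_mult_pos) auto
  have "load_bound j = ln (2 * s + 1)" by (simp add: load_bound_def s_def mult.assoc)
  also have "\<dots> \<le> ln (3 * s)" using s by (intro ln_mono) auto
  also have "\<dots> = ln 3 + ln (real n) + ln ?r" using s ln_s by (simp add: ln_mult)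
  also have "\<dots> \<le> 2 * (1 + ln (real n) + ln ?r)"
    using ln_le_minus_one[of 3] ln_ge_zero[OF n] ln_ge_zero[OF r] by simp
  finally show ?thesis .
qed

lemma run_nonneg: "B > 0 \<Longrightarrow> 0 \<le> run (packing_alg B) n A c i"
  using primal_nonneg by (simp add: run_packing_alg)

lemma OPT_le_run_sum: "B > 0 \<Longrightarrow> OPT n m A c / B \<le> (\<Sum>i<m. run (packing_alg B) n A c i)"
  using OPT_le_primal
  by (simp add: run_packing_alg sum_distrib_left[symmetric] sum_divide_distrib[symmetric]
      divide_right_mono)

lemma card_run_pos_le:
  assumes "B > 0"
  shows "real (card {i. i < m \<and> run (packing_alg B) n A c i > 0})
    \<le> 4 * (1 + real n + \<bar>ln (Bprime n m A)\<bar> + \<bar>ln (OPT n m A c)\<bar> + \<bar>ln (alpha n m A c)\<bar>) ^ 2"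
proof -
  have "{i. i < m \<and> run (packing_alg B) n A c i > 0} = {k. k < m \<and> y k > 0}"
    using assms by (auto simp: run_packing_alg zero_less_divide_iff)
  then show ?thesis using active_rounds_le by simp
qed

lemma constraint_load_le:
  assumes B: "B > 0" and j: "j < n" and i: "i < m" "A i j > 0"
  shows "(\<Sum>i<m. A i j * run (packing_alg B) n A c i)
    \<le> c j * (6 * (1 + ln (real n) + ln (a_max j / a_min j)) / B)"
proof -
  have "(\<Sum>i<m. A i j * run (packing_alg B) n A c i) = 3 / B * c j * load m j"
    using c_pos[OF j] by (simp add: run_packing_alg load_def scaled_def sum_distrib_left field_simps)
  also have "\<dots> \<le> 3 / B * c j * (2 * (1 + ln (real n) + ln (a_max j / a_min j)))"
    using load_le_bound[OF j order.refl] load_bound_le_log_ratio[OF j i] c_pos[OF j] B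
    by (intro mult_left_mono) auto
  also have "\<dots> = c j * (6 * (1 + ln (real n) + ln (a_max j / a_min j)) / B)"
    by simp
  finally show ?thesis .
qed

end

text \<open>The locale assumes every row is a valid column, but run reads only rows i < m,
  so rows from m on may be replaced by row 0.\<close>

lemma valid_instance_padded:
  assumes "valid_instance n m A c"
  shows "packing_instance n (\<lambda>k. A (if k < m then k else 0)) c m"
  using assms by unfold_locales (auto simp: valid_instance_def)

lemma instance_quantities_cong:
  assumes "\<forall>i<m. A' i = A i"
  shows "amax m A' = amax m A" "amin m A' = amin m A" "OPT n m A' c = OPT n m A c"
    "alpha n m A' c = alpha n m A c" "Bprime n m A' = Bprime n m A"
proof -
  have rows: "{A' i j | i. i < m} = {A i j | i. i < m}"
    "{A' i j | i. i < m \<and> A' i j > 0} = {A i j | i. i < m \<and> A i j > 0}" for j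
    using assms by force+
  show "amax m A' = amax m A" "amin m A' = amin m A"
    by (simp_all add: amax_def amin_def rows fun_eq_iff)
  then show "alpha n m A' c = alpha n m A c" "Bprime n m A' = Bprime n m A"
    by (simp_all add: alpha_def Bprime_def)
  show "OPT n m A' c = OPT n m A c"
    using assms by (simp add: OPT_def packing_feasible_def)
qed

lemma valid_instance_guarantees:
  assumes "valid_instance n m A c" "B > 0"
  shows "(\<forall>i<m. run (packing_alg B) n A c i \<ge> 0)
    \<and> (\<Sum>i<m. run (packing_alg B) n A c i) \<ge> OPT n m A c / B
    \<and> real (card {i. i < m \<and> run (packing_alg B) n A c i > 0})
        \<le> 4 * (1 + real n + \<bar>ln (Bprime n m A)\<bar> + \<bar>ln (OPT n m A c)\<bar>
                 + \<bar>ln (alpha n m A c)\<bar>) ^ 2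
    \<and> (\<forall>j<n. (\<exists>i<m. A i j > 0) \<longrightarrow>
        (\<Sum>i<m. A i j * run (packing_alg B) n A c i)
          \<le> c j * (6 * (1 + ln (real n) + ln (amax m A j / amin m A j)) / B))"
proof -
  let ?A = "\<lambda>k. A (if k < m then k else 0)"
  interpret packing_instance n ?A c m using assms(1) by (rule valid_instance_padded)
  have rows: "\<forall>i<m. ?A i = A i" by simp
  have run: "run (packing_alg B) n A c i = run (packing_alg B) n ?A c i" if "i < m" for i
    using that by (intro run_cong) auto
  show ?thesis
    using run_nonneg[OF assms(2)] OPT_le_run_sum[OF assms(2)] card_run_pos_le[OF assms(2)]
      constraint_load_le[OF assms(2)] instance_quantities_cong[OF rows, symmetric]
    by (auto simp: run cong: conj_cong)
qed

theorem theoremD1: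
  shows "\<exists>(K::real) (C::real) (d::nat). K > 0 \<and> C > 0 \<and>
    (\<forall>B::real. B > 0 \<longrightarrow> (\<exists>alg :: online_alg.
      \<forall>n m (A :: nat \<Rightarrow> nat \<Rightarrow> real) (c :: nat \<Rightarrow> real).
        valid_instance n m A c \<longrightarrow>
          (\<forall>i<m. run alg n A c i \<ge> 0)
        \<and> (\<Sum>i<m. run alg n A c i) \<ge> OPT n m A c / B
        \<and> real (card {i. i < m \<and> run alg n A c i > 0})
            \<le> C * (1 + real n + \<bar>ln (Bprime n m A)\<bar> + \<bar>ln (OPT n m A c)\<bar>
                     + \<bar>ln (alpha n m A c)\<bar>) ^ d
        \<and> (\<forall>j<n. (\<exists>i<m. A i j > 0) \<longrightarrow>
            (\<Sum>i<m. A i j * run alg n A c i)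
              \<le> c j * (K * (1 + ln (real n) + ln (amax m A j / amin m A j)) / B))))"
  \<comment> \<open>the witness packing_alg B is found by unification with valid_instance_guarantees\<close>
  by (intro exI[of _ 6] exI[of _ 4] exI[of _ 2] conjI allI impI;
      (rule exI, intro allI impI, rule valid_instance_guarantees)?) simp_all

end
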